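(* Let $Q_{\max}>0$ and let $a:(0,\infty)\to(0,\infty)$ be a strictly increasing, differentiable function (the effective bandwidth) with differentiable inverse. For a rate $r$ in the range of $a$, let $\theta(r)=a^{-1}(r)$ and define the queue violation probability $\epsilon_q(r)=\exp\{-\theta(r)Q_{\max}\}$. Let the SIR be a random variable with a probability density $f$ that is strictly positive on $(0,\infty)$, and define the link failure probability $\epsilon_r(r)=\mathbb{P}[\log(1+\mathrm{SIR})<r]$. Define the total error $\epsilon(r)=\epsilon_q(r)+\epsilon_r(r)-\epsilon_q(r)\epsilon_r(r)$. Then the equation $\epsilon_q(r)=\epsilon_r(r)$ has at most one root. Moreover, given a target error $\epsilon'\in(0,1)$, if $r^\ast$ is a root of $\epsilon_q(r)=\epsilon_r(r)$ and $$\epsilon_r(r^\ast)\le 1-\sqrt{1-\epsilon'},$$ then the target QoS $(\epsilon',Q_{\max})$ can be met by rate selection, i.e. there exists a rate $r$ (namely $r=r^\ast$) with $\epsilon(r)\le\epsilon'$.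
   Context: This formalizes the paper's approximation model: the queue violation probability at service rate $r=a(\theta)$ with tolerable queue length $Q_{\max}$ is approximated by $e^{-\theta Q_{\max}}$, the channel fails to support rate $r$ when the Shannon rate $\log(1+\mathrm{SIR})$ is below $r$, and the total error is approximated by $1-(1-\epsilon_q)(1-\epsilon_r)$. *)

theory Defs
  imports "HOL-Probability.Probability"
begin

definition theta_of :: "(real \<Rightarrow> real) \<Rightarrow> real \<Rightarrow> real" where
  "theta_of a r = inv_into {0<..} a r"

definition eps_q :: "(real \<Rightarrow> real) \<Rightarrow> real \<Rightarrow> real \<Rightarrow> real" where
  "eps_q a Qmax r = exp (- theta_of a r * Qmax)"

definition eps_r :: "'w measure \<Rightarrow> ('w \<Rightarrow> real) \<Rightarrow> real \<Rightarrow> real" where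
  "eps_r M SIR r = measure M {\<omega> \<in> space M. ln (1 + SIR \<omega>) < r}"

definition eps_total :: "(real \<Rightarrow> real) \<Rightarrow> real \<Rightarrow> 'w measure \<Rightarrow> ('w \<Rightarrow> real) \<Rightarrow> real \<Rightarrow> real" where
  "eps_total a Qmax M SIR r =
     eps_q a Qmax r + eps_r M SIR r - eps_q a Qmax r * eps_r M SIR r"

end

theory Submission
  imports Defs
begin

text \<open>Since \<open>\<theta> = a\<inverse>\<close> is increasing, \<open>\<epsilon>\<^sub>q\<close> is strictly decreasing in the rate, while
  \<open>\<epsilon>\<^sub>r\<close>, the distribution function of \<open>log(1 + SIR)\<close>, is nondecreasing; so the two
  curves cross at most once. At a crossing \<open>r\<^sup>*\<close> with common value \<open>e\<close> the total error is
  \<open>1 - (1 - e)\<^sup>2\<close>, which is at most \<open>\<epsilon>'\<close> as soon as \<open>1 - e \<ge> sqrt (1 - \<epsilon>')\<close>.\<close>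

lemma strict_mono_on_inv_into:
  fixes f :: "'a::linorder \<Rightarrow> 'b::linorder"
  assumes "strict_mono_on A f"
  shows "strict_mono_on (f ` A) (inv_into A f)"
proof (rule strict_mono_onI)
  fix r s assume "r \<in> f ` A" "s \<in> f ` A" "r < s"
  then obtain x y where "x \<in> A" "y \<in> A" "r = f x" "s = f y" "f x < f y"
    by auto
  moreover have "inj_on f A"
    using assms by (rule strict_mono_on_imp_inj_on)
  ultimately show "inv_into A f r < inv_into A f s"
    using strict_mono_on_less[OF assms] by simp
qed

lemma strict_antimono_on_eps_q:
  assumes "Qmax > 0" and "strict_mono_on {0<..} a"
  shows "strict_antimono_on (a ` {0<..}) (eps_q a Qmax)"
proof (rule monotone_onI)
  fix r s assume "r \<in> a ` {0<..}" "s \<in> a ` {0<..}" "r < s"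
  then have "theta_of a r < theta_of a s"
    using strict_mono_on_inv_into[OF assms(2)] unfolding theta_of_def
    by (simp add: monotone_onD)
  then show "eps_q a Qmax s < eps_q a Qmax r"
    using \<open>Qmax > 0\<close> unfolding eps_q_def by simp
qed

lemma mono_eps_r:
  assumes "finite_measure M" and "SIR \<in> borel_measurable M"
  shows "mono (eps_r M SIR)"
proof (rule monoI)
  fix r s :: real assume "r \<le> s"
  have "{\<omega> \<in> space M. ln (1 + SIR \<omega>) < s} \<in> sets M"
    using assms(2) by measurable
  with \<open>r \<le> s\<close> show "eps_r M SIR r \<le> eps_r M SIR s"
    unfolding eps_r_def by (intro finite_measure.finite_measure_mono[OF assms(1)]) auto
qed

lemma strict_antimono_mono_crossing_unique:
  fixes g h :: "'a::linorder \<Rightarrow> 'b::linorder"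
  assumes "strict_antimono_on S g" and "mono h"
    and "x \<in> S" "y \<in> S" "g x = h x" "g y = h y"
  shows "x = y"
proof (rule ccontr)
  have crossing_order: False if "u \<in> S" "v \<in> S" "u < v" "g u = h u" "g v = h v" for u v
  proof -
    have "g v < g u" using monotone_onD[OF assms(1) that(1-3)] by simp
    moreover have "h u \<le> h v" using \<open>mono h\<close> \<open>u < v\<close> by (simp add: monoD)
    ultimately show False using that by simp
  qed
  assume "x \<noteq> y"
  then show False
    using crossing_order[of x y] crossing_order[of y x] assms(3-6) linorder_neq_iff by blast
qed

lemma one_minus_square_le_of_le_one_minus_sqrt:
  fixes e \<epsilon> :: real
  assumes "\<epsilon> \<le> 1" and "e \<le> 1 - sqrt (1 - \<epsilon>)"
  shows "1 - (1 - e)\<^sup>2 \<le> \<epsilon>"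
proof -
  have "1 - \<epsilon> = (sqrt (1 - \<epsilon>))\<^sup>2" using assms(1) by simp
  also have "\<dots> \<le> (1 - e)\<^sup>2" using assms by (intro power_mono) auto
  finally show ?thesis by simp
qed

theorem theorem3:
  fixes a :: "real \<Rightarrow> real" and Qmax :: real
    and M :: "'w measure" and SIR :: "'w \<Rightarrow> real" and f :: "real \<Rightarrow> ennreal"
  assumes Qmax_pos: "Qmax > 0"
    and a_pos: "a ` {0<..} \<subseteq> {0<..}"
    and a_mono: "strict_mono_on {0<..} a"
    and a_diff: "\<forall>x>0. a differentiable (at x)"
    and a_inv_diff: "\<forall>y \<in> a ` {0<..}. inv_into {0<..} a differentiable (at y)"
    and M_prob: "prob_space M"
    and SIR_dist: "distributed M lborel SIR f"
    and f_pos: "\<forall>x>0. f x > 0"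
  shows "(\<forall>r1 \<in> a ` {0<..}. \<forall>r2 \<in> a ` {0<..}.
            eps_q a Qmax r1 = eps_r M SIR r1 \<longrightarrow> eps_q a Qmax r2 = eps_r M SIR r2
            \<longrightarrow> r1 = r2)
       \<and> (\<forall>eps' rstar. 0 < eps' \<and> eps' < 1 \<and> rstar \<in> a ` {0<..}
            \<and> eps_q a Qmax rstar = eps_r M SIR rstar
            \<and> eps_r M SIR rstar \<le> 1 - sqrt (1 - eps')
            \<longrightarrow> (\<exists>r \<in> a ` {0<..}. eps_total a Qmax M SIR r \<le> eps') \<and>
                eps_total a Qmax M SIR rstar \<le> eps')"
proof -
  have "mono (eps_r M SIR)"
    using M_prob distributed_measurable[OF SIR_dist]
    by (intro mono_eps_r) (simp_all add: prob_space_def)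
  with strict_antimono_on_eps_q[OF Qmax_pos a_mono]
  have unique: "\<forall>r1 \<in> a ` {0<..}. \<forall>r2 \<in> a ` {0<..}.
            eps_q a Qmax r1 = eps_r M SIR r1 \<longrightarrow> eps_q a Qmax r2 = eps_r M SIR r2
            \<longrightarrow> r1 = r2"
    by (blast intro: strict_antimono_mono_crossing_unique)
  have "eps_total a Qmax M SIR rstar \<le> eps'"
    if "eps' < 1" "eps_q a Qmax rstar = eps_r M SIR rstar"
      "eps_r M SIR rstar \<le> 1 - sqrt (1 - eps')" for eps' rstar
  proof -
    have "eps_total a Qmax M SIR rstar = 1 - (1 - eps_r M SIR rstar)\<^sup>2"
      using that(2) unfolding eps_total_def by (simp add: power2_eq_square algebra_simps)
    with that show ?thesis
      using one_minus_square_le_of_le_one_minus_sqrt[of eps'] by simp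
  qed
  with unique show ?thesis by blast
qed

end
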